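(* Fix $n\ge1$. Define $i_n:\mathrm{Conf}_n(\mathbb C)\to\mathrm{Conf}^{lf}_\infty(\mathbb C)$ by $i_n(z_1,\dots,z_n)=(z_1,\dots,z_n,R,R+1,R+2,\dots)$ where $R=1+\max_j|z_j|$. Then $i_n$ is continuous with $i_n(1,2,\dots,n)=\widetilde{\mathbb N}$, and the induced homomorphism \[ (i_n)_*:\pi_1\bigl(\mathrm{Conf}_n(\mathbb C),(1,\dots,n)\bigr)\to\pi_1\bigl(\mathrm{Conf}^{lf}_\infty(\mathbb C),\widetilde{\mathbb N}\bigr) \] is injective.
   Context: $\mathrm{Conf}_n(\mathbb C)=\{(z_1,\dots,z_n)\in\mathbb C^n: z_i\ne z_j \text{ for } i\neq j\}$ with the usual topology. $\mathrm{Conf}^{lf}_\infty(\mathbb C)$ is the set of sequences $(x_j)_{j\ge1}$ of pairwise distinct complex numbers such that $\{j:|x_j|\le R\}$ is finite for all $R>0$, with metric $d_{\Sigma}(x,y)=\sum_j2^{-j}\min\{|x_j-y_j|,1\}+d_{\mathcal V}(P(x),P(y))$, where $P(x)=\{x_j\}$ and $d_{\mathcal V}$ is the vague metric $d_{\mathcal V}(A,B)=\sum_j 2^{-j}\frac{|\sum_{a\in A}\varphi_j(a)-\sum_{b\in B}\varphi_j(b)|}{1+|\sum_{a\in A}\varphi_j(a)-\sum_{b\in B}\varphi_j(b)|}$ for a fixed sequence $(\varphi_j)$ of compactly supported continuous real functions such that for each $m$ those supported in $\{|z|\le m\}$ are sup-norm dense among such functions supported in $\{|z|\le m\}$. $\widetilde{\mathbb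 N}=(1,2,3,\dots)$. *)

theory Defs
  imports "HOL-Analysis.Analysis"
begin

text \<open>Conf_n(C) as a subspace of C^n = product topology over the index set {..<n}
  (coordinates z 0, ..., z (n-1) correspond to z_1, ..., z_n).\<close>

definition conf_set :: "nat \<Rightarrow> (nat \<Rightarrow> complex) set" where
  "conf_set n = {z \<in> PiE {..<n} (\<lambda>_. UNIV). inj_on z {..<n}}"

definition conf_top :: "nat \<Rightarrow> (nat \<Rightarrow> complex) topology" where
  "conf_top n = subtopology (product_topology (\<lambda>_. euclidean) {..<n}) (conf_set n)"

definition conf_base :: "nat \<Rightarrow> nat \<Rightarrow> complex" where
  "conf_base n = restrict (\<lambda>j. of_nat (Suc j)) {..<n}"

text \<open>Locally finite infinite configurations: sequences indexed from 0 (x 0 = x_1).\<close>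
definition conf_lf_set :: "(nat \<Rightarrow> complex) set" where
  "conf_lf_set = {x. inj x \<and> (\<forall>R>0. finite {j. cmod (x j) \<le> R})}"

definition Ntilde :: "nat \<Rightarrow> complex" where
  "Ntilde = (\<lambda>j. of_nat (Suc j))"

definition lfsum :: "(complex \<Rightarrow> real) \<Rightarrow> complex set \<Rightarrow> real" where
  "lfsum f A = (\<Sum>a\<in>{a\<in>A. f a \<noteq> 0}. f a)"

text \<open>Admissible test function sequence (phi (k) = phi_{k+1}).\<close>
definition vague_family :: "(nat \<Rightarrow> complex \<Rightarrow> real) \<Rightarrow> bool" where
  "vague_family \<phi> \<longleftrightarrow>
     (\<forall>j. continuous_on UNIV (\<phi> j) \<and> compact (closure {z. \<phi> j z \<noteq> 0})) \<and>
     (\<forall>m::nat. m \<ge> 1 \<longrightarrow>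
        (\<forall>f :: complex \<Rightarrow> real. continuous_on UNIV f \<and> closure {z. f z \<noteq> 0} \<subseteq> cball 0 (real m)
           \<longrightarrow> (\<forall>e>0. \<exists>j. closure {z. \<phi> j z \<noteq> 0} \<subseteq> cball 0 (real m) \<and>
                          (\<forall>z. \<bar>f z - \<phi> j z\<bar> < e))))"

definition vague_dist :: "(nat \<Rightarrow> complex \<Rightarrow> real) \<Rightarrow> complex set \<Rightarrow> complex set \<Rightarrow> real" where
  "vague_dist \<phi> A B =
     (\<Sum>k. (1/2) ^ Suc k * (\<bar>lfsum (\<phi> k) A - lfsum (\<phi> k) B\<bar> /
                              (1 + \<bar>lfsum (\<phi> k) A - lfsum (\<phi> k) B\<bar>)))"

definition sigma_dist :: "(nat \<Rightarrow> complex \<Rightarrow> real) \<Rightarrow> (nat \<Rightarrow> complex) \<Rightarrow> (nat \<Rightarrow> complex) \<Rightarrow> real" where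
  "sigma_dist \<phi> x y =
     (\<Sum>k. (1/2) ^ Suc k * min (cmod (x k - y k)) 1) + vague_dist \<phi> (range x) (range y)"

definition conf_lf_top :: "(nat \<Rightarrow> complex \<Rightarrow> real) \<Rightarrow> (nat \<Rightarrow> complex) topology" where
  "conf_lf_top \<phi> = Metric_space.mtopology conf_lf_set (sigma_dist \<phi>)"

definition incl :: "nat \<Rightarrow> (nat \<Rightarrow> complex) \<Rightarrow> nat \<Rightarrow> complex" where
  "incl n z = (let R = 1 + Max ((\<lambda>j. cmod (z j)) ` {..<n})
               in (\<lambda>j. if j < n then z j else complex_of_real R + of_nat (j - n)))"

definition based_loop :: "'a topology \<Rightarrow> 'a \<Rightarrow> (real \<Rightarrow> 'a) \<Rightarrow> bool" where
  "based_loop X a g \<longleftrightarrow> pathin X g \<and> g 0 = a \<and> g 1 = a"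

definition loop_homotopic :: "'a topology \<Rightarrow> 'a \<Rightarrow> (real \<Rightarrow> 'a) \<Rightarrow> (real \<Rightarrow> 'a) \<Rightarrow> bool" where
  "loop_homotopic X a g h \<longleftrightarrow>
     homotopic_with (\<lambda>k. k 0 = a \<and> k 1 = a) (top_of_set {0..1}) X g h"

end

theory Submission
  imports Defs
begin

text \<open>Restricting a configuration to its first \<open>n\<close> points is continuous from
  \<open>Conf\<^sup>l\<^sup>f\<^sub>\<infinity>(\<complex>)\<close> to \<open>Conf\<^sub>n(\<complex>)\<close>, sends \<open>Ntilde\<close> to \<open>(1,\<dots>,n)\<close> and is a left inverse of
  \<open>i\<^sub>n\<close>; composing a based homotopy between \<open>i\<^sub>n \<circ> g\<close> and \<open>i\<^sub>n \<circ> h\<close> with it yields one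
  between \<open>g\<close> and \<open>h\<close>, so \<open>(i\<^sub>n)\<^sub>*\<close> is injective.
  Continuity of \<open>i\<^sub>n\<close> comes from the metric: \<open>z \<mapsto> d\<^sub>\<Sigma>(i\<^sub>n z\<^sub>0, i\<^sub>n z)\<close> is a series of
  continuous functions dominated by \<open>2\<^sup>-\<^sup>k\<close>, hence continuous by the Weierstrass M-test.\<close>

lemma summable_halves: "summable (\<lambda>k. (1/2::real) ^ Suc k)"
  by (simp add: summable_geometric)

lemma abs_halves_weighted_le: "\<bar>a\<bar> \<le> 1 \<Longrightarrow> \<bar>(1/2::real) ^ Suc k * a\<bar> \<le> (1/2) ^ Suc k"
  by (simp add: abs_mult mult_left_le_one_le)

lemma summable_halves_weighted:
  assumes "\<And>k. \<bar>f k\<bar> \<le> 1"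
  shows "summable (\<lambda>k. (1/2::real) ^ Suc k * f k)"
  by (rule summable_comparison_test[OF _ summable_halves]) (use assms abs_halves_weighted_le in auto)

lemma halves_weighted_triangle:
  assumes "\<And>k. \<bar>a k\<bar> \<le> 1" "\<And>k. \<bar>b k\<bar> \<le> 1" "\<And>k. \<bar>c k\<bar> \<le> 1"
    and "\<And>k. a k \<le> b k + c k"
  shows "(\<Sum>k. (1/2::real) ^ Suc k * a k)
           \<le> (\<Sum>k. (1/2::real) ^ Suc k * b k) + (\<Sum>k. (1/2::real) ^ Suc k * c k)"
proof -
  note summable = summable_halves_weighted[OF assms(1)] summable_halves_weighted[OF assms(2)]
    summable_halves_weighted[OF assms(3)]
  have "(\<Sum>k. (1/2::real) ^ Suc k * a k) \<le> (\<Sum>k. (1/2::real) ^ Suc k * b k + (1/2) ^ Suc k * c k)"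
    using assms(4) by (intro suminf_le summable summable_add) (simp_all add: distrib_left[symmetric])
  also have "\<dots> = (\<Sum>k. (1/2::real) ^ Suc k * b k) + (\<Sum>k. (1/2::real) ^ Suc k * c k)"
    using summable by (intro suminf_add[symmetric])
  finally show ?thesis .
qed

lemma min_one_triangle:
  fixes a b c :: real
  assumes "a \<le> b + c" "0 \<le> b" "0 \<le> c"
  shows "min a 1 \<le> min b 1 + min c 1"
  using assms by linarith

lemma frac_abs_triangle:
  fixes a b c :: real
  shows "\<bar>a - c\<bar> / (1 + \<bar>a - c\<bar>) \<le> \<bar>a - b\<bar> / (1 + \<bar>a - b\<bar>) + \<bar>b - c\<bar> / (1 + \<bar>b - c\<bar>)"
proof -
  define s t u where "s = \<bar>a - b\<bar>" and "t = \<bar>b - c\<bar>" and "u = \<bar>a - c\<bar>"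
  have st: "0 \<le> s" "0 \<le> t" "0 \<le> u" "u \<le> s + t"
    unfolding s_def t_def u_def by auto
  have "u / (1 + u) \<le> (s + t) / (1 + (s + t))"
    using st by (simp add: divide_simps) (simp add: algebra_simps)
  also have "\<dots> \<le> s / (1 + s) + t / (1 + t)"
    using st by (simp add: divide_simps) (simp add: algebra_simps)
  finally show ?thesis unfolding s_def t_def u_def .
qed

lemma vague_dist_nonneg: "0 \<le> vague_dist \<phi> A B"
  unfolding vague_dist_def by (intro suminf_nonneg summable_halves_weighted) auto

lemma sigma_dist_nonneg: "0 \<le> sigma_dist \<phi> x y"
  unfolding sigma_dist_def
  by (intro add_nonneg_nonneg suminf_nonneg summable_halves_weighted vague_dist_nonneg) auto

lemma Metric_space_sigma_dist: "Metric_space M (sigma_dist \<phi>)"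
proof
  fix x y z :: "nat \<Rightarrow> complex"
  show "0 \<le> sigma_dist \<phi> x y"
    by (rule sigma_dist_nonneg)
  show "sigma_dist \<phi> x y = sigma_dist \<phi> y x"
    unfolding sigma_dist_def vague_dist_def by (simp add: norm_minus_commute abs_minus_commute)
  show "sigma_dist \<phi> x y = 0 \<longleftrightarrow> x = y"
  proof
    assume xy: "sigma_dist \<phi> x y = 0"
    have coords: "summable (\<lambda>k. (1/2::real) ^ Suc k * min (cmod (x k - y k)) 1)"
      by (rule summable_halves_weighted) simp
    have "0 \<le> (\<Sum>k. (1/2::real) ^ Suc k * min (cmod (x k - y k)) 1)"
      by (intro suminf_nonneg coords) simp
    then have "(\<Sum>k. (1/2::real) ^ Suc k * min (cmod (x k - y k)) 1) = 0"
      using xy vague_dist_nonneg[of \<phi> "range x" "range y"] unfolding sigma_dist_def by linarith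
    then have "min (cmod (x k - y k)) 1 = 0" for k
      using suminf_eq_zero_iff[OF coords] by simp
    then have "x k = y k" for k
      by (metis min_def norm_eq_zero right_minus_eq zero_neq_one)
    then show "x = y" ..
  qed (simp add: sigma_dist_def vague_dist_def)
  have "(\<Sum>k. (1/2::real) ^ Suc k * min (cmod (x k - z k)) 1)
        \<le> (\<Sum>k. (1/2::real) ^ Suc k * min (cmod (x k - y k)) 1)
          + (\<Sum>k. (1/2::real) ^ Suc k * min (cmod (y k - z k)) 1)"
    by (rule halves_weighted_triangle)
       (auto intro!: min_one_triangle norm_diff_triangle_le)
  moreover have "vague_dist \<phi> (range x) (range z)
                 \<le> vague_dist \<phi> (range x) (range y) + vague_dist \<phi> (range y) (range z)"
    unfolding vague_dist_def by (rule halves_weighted_triangle) (auto intro: frac_abs_triangle)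
  ultimately show "sigma_dist \<phi> x z \<le> sigma_dist \<phi> x y + sigma_dist \<phi> y z"
    unfolding sigma_dist_def by linarith
qed

lemma continuous_map_suminf:
  fixes f :: "nat \<Rightarrow> 'a \<Rightarrow> real"
  assumes cont: "\<And>k. continuous_map X euclideanreal (f k)"
    and bound: "\<And>k x. x \<in> topspace X \<Longrightarrow> \<bar>f k x\<bar> \<le> M k" and "summable M"
  shows "continuous_map X euclideanreal (\<lambda>x. \<Sum>k. f k x)"
proof -
  have "uniform_limit (topspace X) (\<lambda>N x. \<Sum>k<N. f k x) (\<lambda>x. \<Sum>k. f k x) sequentially"
    using bound \<open>summable M\<close> by (intro Weierstrass_m_test) auto
  moreover have "\<forall>\<^sub>F N in sequentially. continuous_map X euclideanreal (\<lambda>x. \<Sum>k<N. f k x)"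
    by (intro always_eventually allI continuous_map_sum cont) simp
  ultimately show ?thesis
    unfolding uniform_limit_iff
    by (intro Met_TC.continuous_map_uniform_limit[where F = sequentially, simplified]) auto
qed

lemma continuous_map_halves_weighted_series:
  assumes "\<And>k. continuous_map X euclideanreal (f k)" and "\<And>k x. x \<in> topspace X \<Longrightarrow> \<bar>f k x\<bar> \<le> 1"
  shows "continuous_map X euclideanreal (\<lambda>x. \<Sum>k. (1/2::real) ^ Suc k * f k x)"
  using assms
  by (intro continuous_map_suminf[OF _ _ summable_halves] continuous_map_real_mult_left abs_halves_weighted_le)

lemma (in Metric_space) continuous_map_to_metric_by_dist:
  assumes "f \<in> topspace X \<rightarrow> M"
    and "\<And>a. a \<in> topspace X \<Longrightarrow> continuous_map X euclideanreal (\<lambda>x. d (f a) (f x))"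
  shows "continuous_map X mtopology f"
  unfolding continuous_map_to_metric
proof (intro ballI allI impI)
  fix a and \<epsilon> :: real
  assume a: "a \<in> topspace X" and "\<epsilon> > 0"
  define U where "U = {x \<in> topspace X. d (f a) (f x) \<in> {..<\<epsilon>}}"
  have "openin X U"
    unfolding U_def using assms(2)[OF a] by (rule openin_continuous_map_preimage) simp
  moreover have "a \<in> U"
    using a assms(1) \<open>\<epsilon> > 0\<close> by (auto simp: U_def Pi_iff)
  moreover have "\<forall>x\<in>U. f x \<in> mball (f a) \<epsilon>"
    using a assms(1) by (auto simp: U_def)
  ultimately show "\<exists>U. openin X U \<and> a \<in> U \<and> (\<forall>x\<in>U. f x \<in> mball (f a) \<epsilon>)"
    by blast
qed

definition incl_radius :: "nat \<Rightarrow> (nat \<Rightarrow> complex) \<Rightarrow> real" where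
  "incl_radius n z = 1 + Max ((\<lambda>j. cmod (z j)) ` {..<n})"

lemma incl_eq:
  "incl n z j = (if j < n then z j else complex_of_real (incl_radius n z + real (j - n)))"
  unfolding incl_def incl_radius_def Let_def by simp

lemma norm_less_incl_radius:
  assumes "j < n"
  shows "cmod (z j) < incl_radius n z"
proof -
  have "cmod (z j) \<le> Max ((\<lambda>j. cmod (z j)) ` {..<n})"
    by (rule Max_ge) (use assms in auto)
  then show ?thesis
    unfolding incl_radius_def by linarith
qed

lemma incl_radius_pos: "n \<ge> 1 \<Longrightarrow> 0 < incl_radius n z"
  using norm_less_incl_radius[of 0 n z] norm_ge_zero[of "z 0"] by linarith

lemma norm_incl_tail:
  assumes "n \<ge> 1" "n \<le> j"
  shows "cmod (incl n z j) = incl_radius n z + real (j - n)"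
proof -
  have "incl n z j = complex_of_real (incl_radius n z + real (j - n))"
    using assms(2) by (simp only: incl_eq not_less[symmetric] if_False)
  then show ?thesis
    using incl_radius_pos[OF assms(1), of z] by (simp only: norm_of_real)
qed

lemma inj_incl:
  assumes "z \<in> conf_set n" "n \<ge> 1"
  shows "inj (incl n z)"
proof (rule injI)
  fix i j
  assume ij: "incl n z i = incl n z j"
  then have norms: "cmod (incl n z i) = cmod (incl n z j)"
    by simp
  have head: "cmod (incl n z k) < incl_radius n z" if "k < n" for k
    using norm_less_incl_radius[OF that] that by (simp add: incl_eq)
  note tail = norm_incl_tail[OF assms(2)]
  consider "i < n" "j < n" | "i < n" "n \<le> j" | "n \<le> i" "j < n" | "n \<le> i" "n \<le> j"
    by linarith
  then show "i = j"
  proof cases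
    case 1
    then show ?thesis
      using ij assms(1) by (simp add: incl_eq conf_set_def inj_on_def)
  next
    case 2
    then show ?thesis
      using norms head[of i] tail[of j z] by simp
  next
    case 3
    then show ?thesis
      using norms head[of j] tail[of i z] by simp
  next
    case 4
    then show ?thesis
      using norms tail[of i z] tail[of j z] by simp
  qed
qed

lemma incl_index_bound:
  assumes "n \<ge> 1" "cmod (incl n z j) \<le> r"
  shows "j < n + nat \<lceil>r\<rceil> + 1"
proof (cases "j < n")
  case False
  then have "real (j - n) < r"
    using assms norm_incl_tail[OF assms(1), of j z] incl_radius_pos[OF assms(1), of z] by simp
  then show ?thesis by linarith
qed simp

lemma incl_in_conf_lf_set:
  assumes "z \<in> conf_set n" "n \<ge> 1"
  shows "incl n z \<in> conf_lf_set"
proof -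
  have "finite {j. cmod (incl n z j) \<le> r}" for r
    by (rule finite_subset[of _ "{..< n + nat \<lceil>r\<rceil> + 1}"])
       (use incl_index_bound[OF assms(2)] in fastforce)+
  then show ?thesis
    unfolding conf_lf_set_def using inj_incl[OF assms] by blast
qed

lemma incl_conf_base:
  assumes "n \<ge> 1"
  shows "incl n (conf_base n) = Ntilde"
proof -
  have "Max ((\<lambda>j. cmod (conf_base n j)) ` {..<n}) = real n"
  proof (rule Max_eqI)
    show "real n \<in> (\<lambda>j. cmod (conf_base n j)) ` {..<n}"
      using assms by (intro image_eqI[of _ _ "n - 1"]) (auto simp: conf_base_def simp del: of_nat_Suc)
  qed (auto simp: conf_base_def simp del: of_nat_Suc)
  then have "incl_radius n (conf_base n) = real n + 1"
    by (simp add: incl_radius_def)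
  then show ?thesis
    by (auto simp: fun_eq_iff incl_eq Ntilde_def conf_base_def)
qed

lemma topspace_conf_top: "topspace (conf_top n) = conf_set n"
  unfolding conf_top_def conf_set_def by auto

lemma topspace_conf_lf_top: "topspace (conf_lf_top \<phi>) = conf_lf_set"
  unfolding conf_lf_top_def by (simp add: Metric_space.topspace_mtopology[OF Metric_space_sigma_dist])

lemma continuous_map_Max:
  assumes "finite I" "I \<noteq> {}" "\<And>i. i \<in> I \<Longrightarrow> continuous_map X euclideanreal (f i)"
  shows "continuous_map X euclideanreal (\<lambda>x. Max ((\<lambda>i. f i x) ` I))"
  using assms
proof (induction I rule: finite_ne_induct)
  case (insert a F)
  then show ?case
    by (simp add: continuous_map_real_max)
qed simp

lemma continuous_map_conf_coordinate:
  "j < n \<Longrightarrow> continuous_map (conf_top n) euclidean (\<lambda>z. z j)"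
  unfolding conf_top_def
  by (intro continuous_map_from_subtopology continuous_map_product_projection) auto

lemma continuous_map_incl_coordinate:
  assumes "n \<ge> 1"
  shows "continuous_map (conf_top n) euclidean (\<lambda>z. incl n z j)"
proof -
  have "continuous_map (conf_top n) euclideanreal (\<lambda>z. Max ((\<lambda>j. cmod (z j)) ` {..<n}))"
    using assms
    by (intro continuous_map_Max continuous_map_norm continuous_map_conf_coordinate)
       (auto simp: lessThan_empty_iff)
  then have "continuous_map (conf_top n) euclideanreal (incl_radius n)"
    unfolding incl_radius_def by (intro continuous_map_add) auto
  then have tail: "continuous_map (conf_top n) euclidean
                     ((\<lambda>r. complex_of_real (r + real (j - n))) \<circ> incl_radius n)"
    by (rule continuous_map_compose) (simp, intro continuous_intros)
  show ?thesis
  proof (cases "j < n")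
    case True
    then show ?thesis
      by (simp add: incl_eq continuous_map_conf_coordinate)
  next
    case False
    then have "(\<lambda>z. incl n z j) = (\<lambda>r. complex_of_real (r + real (j - n))) \<circ> incl_radius n"
      by (simp add: fun_eq_iff incl_eq)
    then show ?thesis
      using tail by simp
  qed
qed

lemma lfsum_range_eq_sum:
  assumes "inj g" "finite J" "\<And>j. f (g j) \<noteq> 0 \<Longrightarrow> j \<in> J"
  shows "lfsum f (range g) = (\<Sum>j\<in>J. f (g j))"
proof -
  have "lfsum f (range g) = (\<Sum>a\<in>g ` J. f a)"
    unfolding lfsum_def using assms(2,3) by (intro sum.mono_neutral_left) auto
  also have "\<dots> = (\<Sum>j\<in>J. f (g j))"
    using inj_on_subset[OF assms(1) subset_UNIV] by (simp add: sum.reindex)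
  finally show ?thesis .
qed

text \<open>Only the first \<open>n + \<lceil>M\<rceil> + 1\<close> points of \<open>incl n z\<close> can lie in the support of \<open>f\<close>,
  so near every \<open>z\<close> the locally finite sum is a fixed finite sum of continuous functions.\<close>

lemma continuous_map_lfsum_incl:
  assumes "n \<ge> 1" "continuous_on UNIV f" "\<And>w. f w \<noteq> 0 \<Longrightarrow> cmod w \<le> M"
  shows "continuous_map (conf_top n) euclideanreal (\<lambda>z. lfsum f (range (incl n z)))"
proof -
  let ?J = "{..< n + nat \<lceil>M\<rceil> + 1}"
  have "continuous_map euclidean euclideanreal f"
    using assms(2) by simp
  then have "continuous_map (conf_top n) euclideanreal (f \<circ> (\<lambda>z. incl n z j))" for j
    by (rule continuous_map_compose[OF continuous_map_incl_coordinate[OF assms(1)]])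
  then have "continuous_map (conf_top n) euclideanreal (\<lambda>z. \<Sum>j\<in>?J. f (incl n z j))"
    by (intro continuous_map_sum) (simp_all add: o_def)
  then show ?thesis
  proof (rule continuous_map_eq)
    fix z
    assume "z \<in> topspace (conf_top n)"
    then have inj: "inj (incl n z)"
      using assms(1) by (simp add: topspace_conf_top inj_incl)
    have support: "j \<in> ?J" if "f (incl n z j) \<noteq> 0" for j
      using incl_index_bound[OF assms(1) assms(3)[OF that]] by simp
    show "(\<Sum>j\<in>?J. f (incl n z j)) = lfsum f (range (incl n z))"
      by (rule lfsum_range_eq_sum[OF inj finite_lessThan support, symmetric])
  qed
qed

lemma vague_family_continuous: "vague_family \<phi> \<Longrightarrow> continuous_on UNIV (\<phi> k)"
  by (simp add: vague_family_def)

lemma vague_family_support_bounded: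
  fixes k :: nat
  assumes "vague_family \<phi>"
  obtains M where "\<And>w. \<phi> k w \<noteq> 0 \<Longrightarrow> cmod w \<le> M"
proof -
  have "bounded (closure {w. \<phi> k w \<noteq> 0})"
    using assms by (simp add: vague_family_def compact_imp_bounded)
  then have "bounded {w. \<phi> k w \<noteq> 0}"
    by (rule bounded_subset) (rule closure_subset)
  then obtain M where "\<forall>w \<in> {w. \<phi> k w \<noteq> 0}. cmod w \<le> M"
    unfolding bounded_iff by blast
  then show ?thesis
    using that by blast
qed

lemma continuous_map_sigma_dist_incl:
  assumes "n \<ge> 1" "vague_family \<phi>"
  shows "continuous_map (conf_top n) euclideanreal (\<lambda>z. sigma_dist \<phi> x (incl n z))"
proof -
  have lfsum: "continuous_map (conf_top n) euclideanreal (\<lambda>z. lfsum (\<phi> k) (range (incl n z)))" for k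
  proof -
    obtain M where "\<And>w. \<phi> k w \<noteq> 0 \<Longrightarrow> cmod w \<le> M"
      using vague_family_support_bounded[OF assms(2), where k = k] by blast
    then show ?thesis
      by (rule continuous_map_lfsum_incl[OF assms(1) vague_family_continuous[OF assms(2)]])
  qed
  have "continuous_map (conf_top n) euclideanreal
          (\<lambda>z. \<Sum>k. (1/2) ^ Suc k * min (cmod (x k - incl n z k)) 1)"
    by (rule continuous_map_halves_weighted_series)
       (intro continuous_map_real_min continuous_map_norm continuous_map_diff
         continuous_map_canonical_const continuous_map_incl_coordinate[OF assms(1)], simp)
  moreover have "continuous_map (conf_top n) euclideanreal (\<lambda>z. vague_dist \<phi> (range x) (range (incl n z)))"
    unfolding vague_dist_def
    by (rule continuous_map_halves_weighted_series)
       (intro continuous_map_real_divide continuous_map_add continuous_map_real_abs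
         continuous_map_diff continuous_map_canonical_const lfsum, simp_all add: add_nonneg_eq_0_iff)
  ultimately show ?thesis
    unfolding sigma_dist_def by (rule continuous_map_add)
qed

lemma continuous_map_incl:
  assumes "n \<ge> 1" "vague_family \<phi>"
  shows "continuous_map (conf_top n) (conf_lf_top \<phi>) (incl n)"
  unfolding conf_lf_top_def
proof (rule Metric_space.continuous_map_to_metric_by_dist[OF Metric_space_sigma_dist])
  show "incl n \<in> topspace (conf_top n) \<rightarrow> conf_lf_set"
    using incl_in_conf_lf_set assms(1) by (simp add: topspace_conf_top)
  show "continuous_map (conf_top n) euclideanreal (\<lambda>z. sigma_dist \<phi> (incl n a) (incl n z))" for a
    by (rule continuous_map_sigma_dist_incl[OF assms])
qed

lemma coordinate_dist_le_sigma_dist: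
  "(1/2::real) ^ Suc j * min (cmod (x j - y j)) 1 \<le> sigma_dist \<phi> x y"
proof -
  have "(\<Sum>k\<in>{j}. (1/2::real) ^ Suc k * min (cmod (x k - y k)) 1)
        \<le> (\<Sum>k. (1/2::real) ^ Suc k * min (cmod (x k - y k)) 1)"
    by (rule sum_le_suminf[OF summable_halves_weighted]) auto
  then have "(1/2::real) ^ Suc j * min (cmod (x j - y j)) 1
             \<le> (\<Sum>k. (1/2::real) ^ Suc k * min (cmod (x k - y k)) 1)"
    by simp
  then show ?thesis
    using vague_dist_nonneg[of \<phi> "range x" "range y"] unfolding sigma_dist_def by linarith
qed

lemma continuous_map_conf_lf_coordinate: "continuous_map (conf_lf_top \<phi>) euclidean (\<lambda>x. x j)"
proof -
  interpret Metric_space conf_lf_set "sigma_dist \<phi>"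
    by (rule Metric_space_sigma_dist)
  have "\<exists>\<delta>>0. \<forall>y. y \<in> conf_lf_set \<and> sigma_dist \<phi> x y < \<delta> \<longrightarrow> dist (x j) (y j) < \<epsilon>"
    if "\<epsilon> > 0" for x and \<epsilon> :: real
  proof (intro exI conjI allI impI)
    show "0 < (1/2::real) ^ Suc j * min \<epsilon> 1"
      using that by simp
    fix y
    assume "y \<in> conf_lf_set \<and> sigma_dist \<phi> x y < (1/2) ^ Suc j * min \<epsilon> 1"
    then have "(1/2::real) ^ Suc j * min (cmod (x j - y j)) 1 < (1/2) ^ Suc j * min \<epsilon> 1"
      using coordinate_dist_le_sigma_dist[of j x y \<phi>] by linarith
    then have "min (cmod (x j - y j)) 1 < min \<epsilon> 1"
      by (rule mult_left_less_imp_less) simp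
    then show "dist (x j) (y j) < \<epsilon>"
      by (simp add: dist_norm min_def split: if_splits)
  qed
  then have "continuous_map mtopology Met_TC.mtopology (\<lambda>x. x j)"
    unfolding metric_continuous_map[OF Met_TC.Metric_space_axioms] by blast
  then show ?thesis
    unfolding conf_lf_top_def by simp
qed

lemma continuous_map_restrict_conf_lf:
  "continuous_map (conf_lf_top \<phi>) (conf_top n) (\<lambda>x. restrict x {..<n})"
  unfolding conf_top_def continuous_map_in_subtopology continuous_map_componentwise
proof (intro conjI)
  show "(\<lambda>x. restrict x {..<n}) \<in> topspace (conf_lf_top \<phi>) \<rightarrow> conf_set n"
    by (auto simp: topspace_conf_lf_top conf_lf_set_def conf_set_def inj_on_def inj_def)
qed (auto simp: continuous_map_conf_lf_coordinate)

lemma restrict_incl: "z \<in> conf_set n \<Longrightarrow> restrict (incl n z) {..<n} = z"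
  by (auto simp: fun_eq_iff incl_eq conf_set_def PiE_def extensional_def)

lemma restrict_Ntilde: "restrict Ntilde {..<n} = conf_base n"
  by (simp add: Ntilde_def conf_base_def)

lemma loop_homotopic_retraction:
  assumes r: "continuous_map Y X r" and ri: "\<And>x. x \<in> topspace X \<Longrightarrow> r (i x) = x"
    and "r b = a" and g: "based_loop X a g" and h: "based_loop X a h"
    and "loop_homotopic Y b (i \<circ> g) (i \<circ> h)"
  shows "loop_homotopic X a g h"
proof -
  have "homotopic_with (\<lambda>k. k 0 = a \<and> k 1 = a) (top_of_set {0..1}) X (r \<circ> (i \<circ> g)) (r \<circ> (i \<circ> h))"
    using assms(6) unfolding loop_homotopic_def
    by (rule homotopic_with_compose_continuous_map_left[OF _ r]) (simp add: \<open>r b = a\<close>)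
  then show ?thesis
    unfolding loop_homotopic_def
  proof (rule homotopic_with_eq)
    fix t
    assume "t \<in> topspace (top_of_set {0..1::real})"
    then have "g t \<in> topspace X" "h t \<in> topspace X"
      using g h by (auto simp: based_loop_def pathin_def continuous_map_def)
    then show "g t = (r \<circ> (i \<circ> g)) t" "h t = (r \<circ> (i \<circ> h)) t"
      by (simp_all add: ri)
  qed auto
qed

theorem mainTheorem4:
  fixes n :: nat and \<phi> :: "nat \<Rightarrow> complex \<Rightarrow> real"
  assumes "n \<ge> 1" and "vague_family \<phi>"
  shows "continuous_map (conf_top n) (conf_lf_top \<phi>) (incl n)
       \<and> incl n (conf_base n) = Ntilde
       \<and> (\<forall>g h. based_loop (conf_top n) (conf_base n) g \<and> based_loop (conf_top n) (conf_base n) h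
              \<and> loop_homotopic (conf_lf_top \<phi>) Ntilde (incl n \<circ> g) (incl n \<circ> h)
              \<longrightarrow> loop_homotopic (conf_top n) (conf_base n) g h)"
proof (intro conjI allI impI)
  show "continuous_map (conf_top n) (conf_lf_top \<phi>) (incl n)"
    using assms by (rule continuous_map_incl)
  show "incl n (conf_base n) = Ntilde"
    using assms(1) by (rule incl_conf_base)
  fix g h
  assume "based_loop (conf_top n) (conf_base n) g \<and> based_loop (conf_top n) (conf_base n) h
          \<and> loop_homotopic (conf_lf_top \<phi>) Ntilde (incl n \<circ> g) (incl n \<circ> h)"
  then show "loop_homotopic (conf_top n) (conf_base n) g h"
    by (intro loop_homotopic_retraction[OF continuous_map_restrict_conf_lf, where i = "incl n" and b = Ntilde])
       (auto simp: topspace_conf_top restrict_incl restrict_Ntilde)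
qed

end
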